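(* Let $\lambda>0$, $x>0$, and let $X^*$ and $H$ be as in the context. Then 1. $\displaystyle\lim_{\varepsilon\to1}\mathbb{E}\big[e^{-xX^*}H(x,\varepsilon X^* )\big]=\frac{e^{-2\lambda}}{1-e^{-\lambda}}\exp[\lambda e^{-x}-x]\left\{\exp[\lambda e^{-x}]\,Q_1\!\left(\sqrt{2\lambda e^{-x}},\sqrt{2\lambda e^{-x}}\right)-1\right\}$; 2. $\displaystyle\lim_{\varepsilon\to\infty}\mathbb{E}\big[e^{-xX^*}H(x,\varepsilon X^* )\big]=\frac{e^{-2\lambda}}{1-e^{-\lambda}}\exp[\lambda e^{-x}-x]\left\{\exp[\lambda e^{-x}]-1\right\}$.
   Context: $X^*$ is a random variable with $\mathbb{P}(X^*=k)=e^{-\lambda}\lambda^{k-1}/(k-1)!$, $k=1,2,\ldots$. For $x>0$ and real $s>0$, $H(x,s):=\frac{e^{-\lambda}}{1-e^{-\lambda}}\left\{\frac{\exp[\lambda e^{-x}]\,\Gamma(s,\lambda e^{-x})}{\Gamma(s)}-1\right\}$, with $\Gamma(s,y)=\int_y^\infty t^{s-1}e^{-t}dt$ the upper incomplete gamma function. $Q_\nu(a,b)=a^{1-\nu}\int_b^\infty t^\nu\exp[-(t^2+a^2)/2]\,I_{\nu-1}(at)\,dt$ is the generalized Marcum Q-function of order $\nu$, where $I_\nu$ is the modified Bessel function of the first kind of order $\nu$. *)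

theory Defs
  imports "HOL-Analysis.Analysis" "HOL-Probability.Probability"
begin

definition Xstar_pmf :: "real \<Rightarrow> nat pmf" where
  "Xstar_pmf lam = map_pmf Suc (poisson_pmf lam)"

definition upper_inc_Gamma :: "real \<Rightarrow> real \<Rightarrow> real" where
  "upper_inc_Gamma s y = integral {y..} (\<lambda>t. t powr (s - 1) * exp (- t))"

definition H_fun :: "real \<Rightarrow> real \<Rightarrow> real \<Rightarrow> real" where
  "H_fun lam x s = exp (- lam) / (1 - exp (- lam)) *
     (exp (lam * exp (- x)) * upper_inc_Gamma s (lam * exp (- x)) / Gamma s - 1)"

definition bessel_I :: "real \<Rightarrow> real \<Rightarrow> real" where
  "bessel_I nu z = (\<Sum>m. (z / 2) powr (2 * real m + nu) * rGamma (real m + nu + 1) / fact m)"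

definition marcum_Q :: "real \<Rightarrow> real \<Rightarrow> real \<Rightarrow> real" where
  "marcum_Q nu a b = a powr (1 - nu) *
     integral {b..} (\<lambda>t. t powr nu * exp (- (t\<^sup>2 + a\<^sup>2) / 2) * bessel_I (nu - 1) (a * t))"

end

(* Write y = lam e^-x, c = e^-lam / (1 - e^-lam) and X* = 1 + N with N ~ Poisson(lam).  Since
   0 <= Gamma(s,y) <= Gamma(s), the function H(x,.) is bounded on (0,oo), so both limits may be taken
   inside the expectation by dominated convergence.
   As s -> oo, the part of Gamma(s) coming from [0,y] is at most y^s, negligible against
   Gamma(s) >= (2y)^(s-1) e^(-2y-1); hence H(x,s) -> c (e^y - 1) and the Poisson sum is elementary.
   As eps -> 1, continuity of Gamma(s,y) in s leaves H(x,k) at the integers, where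
   Gamma(k+1,y) = k! e^-y e_k(y) with e_k the k-th partial sum of the exponential series.  The Poisson
   sum then produces sum_k y^k/k! e_k(y).  Expanding I_0 in Q_1(a,a), a^2 = 2y, and integrating term
   by term against the Gaussian moments int_a^oo t (t^2/2)^k e^(-t^2/2) dt = k! e^-y e_k(y) yields
   the same series. *)

theory Submission
  imports Defs "HOL-Real_Asymp.Real_Asymp"
begin

lemma integral_dominated_convergence_at:
  fixes s :: "'c::first_countable_topology \<Rightarrow> 'a \<Rightarrow> 'b::{banach, second_countable_topology}"
  assumes "f \<in> borel_measurable M" "\<And>t. s t \<in> borel_measurable M" "integrable M w"
    and lim: "AE x in M. ((\<lambda>t. s t x) \<longlongrightarrow> f x) (at a within S)"
    and bound: "\<forall>\<^sub>F t in at a within S. AE x in M. norm (s t x) \<le> w x"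
  shows "((\<lambda>t. integral\<^sup>L M (s t)) \<longlongrightarrow> integral\<^sup>L M f) (at a within S)"
proof (rule tendsto_at_iff_sequentially[THEN iffD2], intro allI impI)
  fix X :: "nat \<Rightarrow> 'c" assume "\<forall>i. X i \<in> S - {a}" "X \<longlonglongrightarrow> a"
  then have X: "filterlim X (at a within S) sequentially"
    by (simp add: filterlim_at)
  from filterlim_iff[THEN iffD1, OF X, rule_format, OF bound]
  obtain N where w: "\<And>n. N \<le> n \<Longrightarrow> AE x in M. norm (s (X n) x) \<le> w x"
    by (auto simp: eventually_sequentially)
  show "((\<lambda>t. integral\<^sup>L M (s t)) \<circ> X) \<longlonglongrightarrow> integral\<^sup>L M f"
    unfolding comp_def
  proof (rule LIMSEQ_offset, rule integral_dominated_convergence)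
    show "AE x in M. norm (s (X (n + N)) x) \<le> w x" for n
      by (rule w) auto
    show "AE x in M. (\<lambda>n. s (X (n + N)) x) \<longlonglongrightarrow> f x"
      using lim by eventually_elim
        (auto intro: LIMSEQ_ignore_initial_segment filterlim_compose[OF _ X])
  qed (use assms in auto)
qed

lemma has_integral_atLeast_FTC:
  fixes f F :: "real \<Rightarrow> real"
  assumes deriv: "\<And>t. a \<le> t \<Longrightarrow> (F has_real_derivative f t) (at t)"
    and nonneg: "\<And>t. a \<le> t \<Longrightarrow> 0 \<le> f t"
    and lim: "(F \<longlongrightarrow> T) at_top"
  shows "(f has_integral T - F a) {a..}"
proof (rule has_integral_to_inf)
  have FTC: "(f has_integral F b - F a) {a..b}" if "a \<le> b" for b
    using that deriv
    by (intro fundamental_theorem_of_calculus)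
       (auto simp: has_real_derivative_iff_has_vector_derivative intro: has_vector_derivative_at_within)
  show "f integrable_on {a..b}" for b
    using FTC by (cases "a \<le> b") auto
  have "((\<lambda>b. F b - F a) \<longlongrightarrow> T - F a) at_top"
    using lim by (intro tendsto_intros)
  moreover have "\<forall>\<^sub>F b in at_top. F b - F a = integral {a..b} f"
    using FTC by (intro eventually_at_top_linorderI[of a]) (auto intro: integral_unique[symmetric])
  ultimately show "((\<lambda>b. integral {a..b} f) \<longlongrightarrow> T - F a) at_top"
    by (rule Lim_transform_eventually)
qed (use nonneg in auto)

lemma has_integral_suminf_nonneg:
  fixes h :: "nat \<Rightarrow> 'a::euclidean_space \<Rightarrow> real"
  assumes int: "\<And>m. (h m has_integral V m) S"
    and nonneg: "\<And>m t. t \<in> S \<Longrightarrow> 0 \<le> h m t"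
    and series: "\<And>t. t \<in> S \<Longrightarrow> (\<lambda>m. h m t) sums g t"
    and "summable V"
  shows "(g has_integral suminf V) S"
proof (rule has_integral_monotone_convergence_increasing)
  show "((\<lambda>t. \<Sum>m<n. h m t) has_integral (\<Sum>m<n. V m)) S" for n
    by (intro has_integral_sum int) auto
  show "(\<lambda>n. \<Sum>m<n. h m t) \<longlonglongrightarrow> g t" if "t \<in> S" for t
    using series[OF that] by (simp add: sums_def)
qed (use nonneg \<open>summable V\<close> in \<open>auto intro: summable_LIMSEQ\<close>)

lemma exp_series_sums_real: "(\<lambda>n. z ^ n / fact n) sums exp (z :: real)"
  using exp_converges[of z] by (simp add: divide_inverse mult.commute)

definition exp_trunc :: "nat \<Rightarrow> real \<Rightarrow> real" where
  "exp_trunc m t = (\<Sum>j\<le>m. t ^ j / fact j)"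

lemma has_real_derivative_exp_trunc:
  "(exp_trunc m has_real_derivative exp_trunc m t - t ^ m / fact m) (at t)"
proof (induction m)
  case 0
  then show ?case by (simp add: exp_trunc_def)
next
  case (Suc m)
  have "((\<lambda>t. t ^ Suc m / fact (Suc m)) has_real_derivative real (Suc m) * t ^ (Suc m - 1) / fact (Suc m)) (at t)"
    by (intro derivative_eq_intros DERIV_pow) auto
  moreover have "real (Suc m) * t ^ (Suc m - 1) / fact (Suc m) = t ^ m / fact m"
    by (simp add: fact_Suc del: of_nat_Suc)
  moreover have "exp_trunc (Suc m) = (\<lambda>t. exp_trunc m t + t ^ Suc m / fact (Suc m))"
    by (auto simp: exp_trunc_def)
  ultimately show ?case
    using DERIV_add[OF Suc.IH] by (fastforce simp: exp_trunc_def)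
qed

lemma exp_trunc_nonneg: "t \<ge> 0 \<Longrightarrow> exp_trunc m t \<ge> 0"
  unfolding exp_trunc_def by (intro sum_nonneg) auto

lemma exp_trunc_le_exp:
  assumes "t \<ge> 0"
  shows "exp_trunc m t \<le> exp t"
proof -
  have "(\<Sum>j<Suc m. t ^ j / fact j) \<le> (\<Sum>j. t ^ j / fact j)"
    using assms exp_series_sums_real[of t] by (intro sum_le_suminf) (auto simp: sums_iff)
  then show ?thesis
    using exp_series_sums_real[of t] by (simp add: exp_trunc_def lessThan_Suc_atMost sums_iff)
qed

lemma exp_minus_mult_exp_trunc_tendsto_0: "((\<lambda>t. exp (- t) * exp_trunc m t) \<longlongrightarrow> 0) at_top"
proof -
  have "((\<lambda>t::real. \<Sum>j\<le>m. t ^ j / exp t / fact j) \<longlongrightarrow> 0) at_top"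
    by (intro tendsto_null_sum tendsto_divide_zero tendsto_power_div_exp_0)
  moreover have "(\<lambda>t. \<Sum>j\<le>m. t ^ j / exp t / fact j) = (\<lambda>t. exp (- t) * exp_trunc m t)"
    by (auto simp: exp_trunc_def sum_distrib_left exp_minus field_simps)
  ultimately show ?thesis by simp
qed

lemma Gamma_integrand_has_integral:
  assumes "s > (0::real)"
  shows "((\<lambda>t. t powr (s - 1) * exp (- t)) has_integral Gamma s) {0..}"
  using Gamma_integral_real[OF assms] by (simp add: exp_minus divide_inverse)

lemma Gamma_integrand_set_integrable:
  assumes "s > (0::real)" "S \<in> sets lebesgue" "S \<subseteq> {0..}"
  shows "set_integrable lebesgue S (\<lambda>t. t powr (s - 1) * exp (- t))"
proof -
  have "(\<lambda>t. t powr (s - 1) * exp (- t)) absolutely_integrable_on {0..}"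
    using Gamma_integrand_has_integral[OF assms(1)] by (intro nonnegative_absolutely_integrable_1) auto
  then show ?thesis
    by (rule set_integrable_subset[OF _ assms(2,3)])
qed

lemma Gamma_integrand_integrable_on:
  assumes "s > (0::real)" "S \<in> sets lebesgue" "S \<subseteq> {0..}"
  shows "(\<lambda>t. t powr (s - 1) * exp (- t)) integrable_on S"
  using set_lebesgue_integral_eq_integral(1)[OF Gamma_integrand_set_integrable[OF assms]] .

lemma Gamma_integrand_le_add:
  fixes t :: real
  assumes "t > 0" "a \<le> s" "s \<le> b"
  shows "t powr (s - 1) * exp (- t) \<le> t powr (a - 1) * exp (- t) + t powr (b - 1) * exp (- t)"
proof -
  have "t powr (s - 1) \<le> t powr (a - 1) + t powr (b - 1)"
  proof (cases "t \<ge> 1")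
    case True
    then have "t powr (s - 1) \<le> t powr (b - 1)"
      using assms by (intro powr_mono) auto
    then show ?thesis
      using powr_ge_zero[of t "a - 1"] by linarith
  next
    case False
    then have "t powr (s - 1) \<le> t powr (a - 1)"
      using assms by (intro powr_mono') auto
    then show ?thesis
      using powr_ge_zero[of t "b - 1"] by linarith
  qed
  then show ?thesis
    by (simp add: mult_right_mono flip: distrib_right)
qed

lemma Gamma_eq_integral_plus_upper_inc_Gamma:
  assumes "s > (0::real)" "y \<ge> 0"
  shows "Gamma s = integral {0..y} (\<lambda>t. t powr (s - 1) * exp (- t)) + upper_inc_Gamma s y"
proof -
  have "{0..y} \<union> {y..} = {0..}" using assms by auto
  moreover have "integral ({0..y} \<union> {y..}) (\<lambda>t. t powr (s - 1) * exp (- t)) =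
     integral {0..y} (\<lambda>t. t powr (s - 1) * exp (- t)) + integral {y..} (\<lambda>t. t powr (s - 1) * exp (- t))"
    using assms by (intro integral_Un) (auto intro!: Gamma_integrand_integrable_on negligible_subset[of "{y}"])
  ultimately show ?thesis
    using Gamma_integrand_has_integral[OF assms(1)] by (simp add: upper_inc_Gamma_def integral_unique)
qed

lemma upper_inc_Gamma_nonneg:
  assumes "s > (0::real)" "y \<ge> 0"
  shows "0 \<le> upper_inc_Gamma s y"
  unfolding upper_inc_Gamma_def using assms by (intro integral_nonneg Gamma_integrand_integrable_on) auto

lemma upper_inc_Gamma_le_Gamma:
  assumes "s > (0::real)" "y \<ge> 0"
  shows "upper_inc_Gamma s y \<le> Gamma s"
proof -
  have "0 \<le> integral {0..y} (\<lambda>t. t powr (s - 1) * exp (- t))"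
    using assms by (intro integral_nonneg Gamma_integrand_integrable_on) auto
  then show ?thesis
    using Gamma_eq_integral_plus_upper_inc_Gamma[OF assms] by linarith
qed

lemma upper_inc_Gamma_eq_set_lebesgue_integral:
  assumes "s > (0::real)" "y \<ge> 0"
  shows "upper_inc_Gamma s y = (LINT t:{y..}|lebesgue. t powr (s - 1) * exp (- t))"
  unfolding upper_inc_Gamma_def using assms
  by (intro set_lebesgue_integral_eq_integral(2)[symmetric] Gamma_integrand_set_integrable) auto

lemma upper_inc_Gamma_of_nat:
  assumes "y > 0"
  shows "upper_inc_Gamma (real (Suc m)) y = fact m * exp (- y) * exp_trunc m y"
proof -
  let ?F = "\<lambda>t. - fact m * (exp (- t) * exp_trunc m t)"
  have "(?F has_real_derivative t powr (real (Suc m) - 1) * exp (- t)) (at t)" if "y \<le> t" for t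
  proof -
    have "((\<lambda>t. exp (- t)) has_real_derivative - exp (- t)) (at t)"
      by (auto intro!: derivative_eq_intros)
    from DERIV_cmult[OF DERIV_mult[OF this has_real_derivative_exp_trunc[of m t]], of "- fact m"]
    have "(?F has_real_derivative
        - fact m * (- exp (- t) * exp_trunc m t + exp (- t) * (exp_trunc m t - t ^ m / fact m))) (at t)"
      by (simp add: algebra_simps)
    moreover have "- fact m * (- exp (- t) * exp_trunc m t + exp (- t) * (exp_trunc m t - t ^ m / fact m))
        = t powr (real (Suc m) - 1) * exp (- t)"
      using that assms by (simp add: powr_realpow field_simps)
    ultimately show ?thesis by simp
  qed
  moreover have "(?F \<longlongrightarrow> - fact m * 0) at_top"
    by (intro tendsto_intros exp_minus_mult_exp_trunc_tendsto_0)
  ultimately have "((\<lambda>t. t powr (real (Suc m) - 1) * exp (- t)) has_integral - fact m * 0 - ?F y) {y..}"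
    by (intro has_integral_atLeast_FTC) auto
  then show ?thesis
    unfolding upper_inc_Gamma_def by (simp add: integral_unique)
qed

lemma set_integral_Gamma_integrand_tendsto:
  fixes y s0 :: real
  assumes y: "y > 0" and s0: "s0 > 0"
  shows "((\<lambda>s. LINT t:{y..}|lebesgue. t powr (s - 1) * exp (- t))
           \<longlongrightarrow> (LINT t:{y..}|lebesgue. t powr (s0 - 1) * exp (- t))) (at s0)"
proof -
  let ?f = "\<lambda>s t. indicator {y..} t *\<^sub>R (t powr (s - 1) * exp (- t))"
  let ?w = "\<lambda>t. ?f (s0 / 2) t + ?f (s0 + 1) t"
  have meas: "?f s \<in> borel_measurable lebesgue" for s
    by (rule measurable_completion) measurable
  have "((\<lambda>s. integral\<^sup>L lebesgue (?f s)) \<longlongrightarrow> integral\<^sup>L lebesgue (?f s0)) (at s0)"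
  proof (rule integral_dominated_convergence_at)
    have int: "integrable lebesgue (?f s)" if "s > 0" for s
      using Gamma_integrand_set_integrable[OF that, of "{y..}"] y by (simp add: set_integrable_def)
    show "integrable lebesgue ?w"
      using s0 by (intro Bochner_Integration.integrable_add int) auto
    have "((\<lambda>s. ?f s t) \<longlongrightarrow> ?f s0 t) (at s0)" for t
    proof (cases "t \<in> {y..}")
      case True
      then have "t \<noteq> 0" using y by auto
      then have "((\<lambda>s. t powr (s - 1) * exp (- t)) \<longlongrightarrow> t powr (s0 - 1) * exp (- t)) (at s0)"
        by (intro tendsto_intros) auto
      with True show ?thesis by simp
    qed simp
    then show "AE t in lebesgue. ((\<lambda>s. ?f s t) \<longlongrightarrow> ?f s0 t) (at s0)"
      by simp
    have "\<forall>\<^sub>F s in at s0. s \<in> {s0 / 2 <..< s0 + 1}"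
      using s0 by (intro eventually_at_in_open') auto
    then show "\<forall>\<^sub>F s in at s0. AE t in lebesgue. norm (?f s t) \<le> ?w t"
    proof (elim eventually_mono, intro AE_I2)
      fix s t assume "s \<in> {s0 / 2 <..< s0 + 1}"
      then show "norm (?f s t) \<le> ?w t"
        using y Gamma_integrand_le_add[of t "s0 / 2" s "s0 + 1"] by (cases "t \<in> {y..}") auto
    qed
  qed (rule meas)+
  then show ?thesis
    by (simp add: set_lebesgue_integral_def)
qed

lemma isCont_upper_inc_Gamma:
  assumes y: "y > 0" and s0: "s0 > 0"
  shows "isCont (\<lambda>s. upper_inc_Gamma s y) s0"
proof -
  have "\<forall>\<^sub>F s in at s0. (LINT t:{y..}|lebesgue. t powr (s - 1) * exp (- t)) = upper_inc_Gamma s y"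
    using eventually_at_in_open'[of "{0<..}" s0] s0 y
    by (auto elim!: eventually_mono simp: upper_inc_Gamma_eq_set_lebesgue_integral)
  with set_integral_Gamma_integrand_tendsto[OF y s0]
  have "((\<lambda>s. upper_inc_Gamma s y) \<longlongrightarrow> (LINT t:{y..}|lebesgue. t powr (s0 - 1) * exp (- t))) (at s0)"
    by (rule Lim_transform_eventually)
  then show ?thesis
    unfolding isCont_def using s0 y by (simp add: upper_inc_Gamma_eq_set_lebesgue_integral)
qed

lemma integral_Gamma_integrand_le_powr:
  fixes y s :: real
  assumes "y > 0" "s \<ge> 1"
  shows "integral {0..y} (\<lambda>t. t powr (s - 1) * exp (- t)) \<le> y powr s"
proof -
  have "integral {0..y} (\<lambda>t. t powr (s - 1) * exp (- t)) \<le> integral {0..y} (\<lambda>t. y powr (s - 1))"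
  proof (rule integral_le)
    show "(\<lambda>t. t powr (s - 1) * exp (- t)) integrable_on {0..y}"
      using assms by (intro Gamma_integrand_integrable_on) auto
    fix t assume t: "t \<in> {0..y}"
    then have "t powr (s - 1) \<le> y powr (s - 1)" "exp (- t) \<le> 1"
      using assms by (auto intro: powr_mono2)
    then show "t powr (s - 1) * exp (- t) \<le> y powr (s - 1)"
      by (metis exp_ge_zero mult_left_le powr_ge_zero order_trans)
  qed (rule integrable_const_ivl)
  also have "\<dots> = y powr s"
    using assms by (simp add: powr_diff)
  finally show ?thesis .
qed

lemma powr_mult_exp_le_Gamma:
  fixes M s :: real
  assumes "M > 0" "s \<ge> 1"
  shows "M powr (s - 1) * exp (- (M + 1)) \<le> Gamma s"
proof -
  have "M powr (s - 1) * exp (- (M + 1)) = integral {M..M + 1} (\<lambda>t. M powr (s - 1) * exp (- (M + 1)))"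
    by simp
  also have "\<dots> \<le> integral {M..M + 1} (\<lambda>t. t powr (s - 1) * exp (- t))"
  proof (rule integral_le)
    show "(\<lambda>t. t powr (s - 1) * exp (- t)) integrable_on {M..M + 1}"
      using assms by (intro Gamma_integrand_integrable_on) auto
    fix t assume "t \<in> {M..M + 1}"
    then show "M powr (s - 1) * exp (- (M + 1)) \<le> t powr (s - 1) * exp (- t)"
      using assms by (intro mult_mono powr_mono2) auto
  qed (rule integrable_const_ivl)
  also have "\<dots> \<le> integral {0..} (\<lambda>t. t powr (s - 1) * exp (- t))"
    using assms by (intro integral_subset_le Gamma_integrand_integrable_on) auto
  also have "\<dots> = Gamma s"
    using Gamma_integrand_has_integral[of s] assms by (simp add: integral_unique)
  finally show ?thesis .
qed

lemma integral_Gamma_integrand_div_Gamma_le: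
  fixes y s :: real
  assumes y: "y > 0" and s: "s \<ge> 1"
  shows "integral {0..y} (\<lambda>t. t powr (s - 1) * exp (- t)) / Gamma s \<le> 2 * y * exp (2 * y + 1) / 2 powr s"
proof -
  have "integral {0..y} (\<lambda>t. t powr (s - 1) * exp (- t)) / Gamma s
      \<le> y powr s / ((2 * y) powr (s - 1) * exp (- (2 * y + 1)))"
    using frac_le[OF _ integral_Gamma_integrand_le_powr[OF y s] _ powr_mult_exp_le_Gamma[of "2 * y" s]] s y
    by simp
  also have "(2 * y) powr (s - 1) = 2 powr s * y powr s / (2 * y)"
    using y by (simp add: powr_diff powr_mult)
  also have "exp (- (2 * y + 1)) = 1 / exp (2 * y + 1)"
    by (subst exp_minus) (simp add: divide_inverse)
  also have "y powr s / (2 powr s * y powr s / (2 * y) * (1 / exp (2 * y + 1))) = 2 * y * exp (2 * y + 1) / 2 powr s"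
    using y by (simp add: divide_simps)
  finally show ?thesis .
qed

lemma upper_inc_Gamma_div_Gamma_tendsto_1:
  assumes y: "y > 0"
  shows "((\<lambda>s. upper_inc_Gamma s y / Gamma s) \<longlongrightarrow> 1) at_top"
proof -
  define L where "L s = integral {0..y} (\<lambda>t. t powr (s - 1) * exp (- t)) / Gamma s" for s
  have "((\<lambda>s::real. 2 * y * exp (2 * y + 1) / 2 powr s) \<longlongrightarrow> 0) at_top"
    by real_asymp
  moreover have "\<forall>\<^sub>F s in at_top. 0 \<le> L s \<and> L s \<le> 2 * y * exp (2 * y + 1) / 2 powr s"
    using y unfolding L_def
    by (intro eventually_at_top_linorderI[of 1] conjI divide_nonneg_pos integral_nonneg
        Gamma_integrand_integrable_on integral_Gamma_integrand_div_Gamma_le) auto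
  ultimately have "(L \<longlongrightarrow> 0) at_top"
    by (intro tendsto_sandwich[of "\<lambda>_. 0" L]) (auto elim: eventually_mono)
  then have "((\<lambda>s. 1 - L s) \<longlongrightarrow> 1) at_top"
    by (intro tendsto_eq_intros) auto
  moreover have "\<forall>\<^sub>F s in at_top. 1 - L s = upper_inc_Gamma s y / Gamma s"
  proof (intro eventually_at_top_linorderI[of 1])
    fix s :: real assume "s \<ge> 1"
    then have "Gamma s > 0" by simp
    then show "1 - L s = upper_inc_Gamma s y / Gamma s"
      unfolding L_def using Gamma_eq_integral_plus_upper_inc_Gamma[of s y] \<open>s \<ge> 1\<close> y
      by (simp add: divide_simps)
  qed
  ultimately show ?thesis
    by (rule Lim_transform_eventually)
qed

lemma bessel_I_0_sums:
  assumes "z > 0"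
  shows "(\<lambda>m. ((z / 2)\<^sup>2) ^ m / (fact m)\<^sup>2) sums bessel_I 0 z"
proof -
  have term_eq: "(z / 2) powr (2 * real m + 0) * rGamma (real m + 0 + 1) / fact m = ((z / 2)\<^sup>2) ^ m / (fact m)\<^sup>2"
    for m
  proof -
    have "(z / 2) powr (2 * real m + 0) = (z / 2) powr real (2 * m)"
      by simp
    also have "\<dots> = (z / 2) ^ (2 * m)"
      using assms by (intro powr_realpow) simp
    also have "\<dots> = ((z / 2)\<^sup>2) ^ m"
      by (simp only: power_mult)
    finally have pow: "(z / 2) powr (2 * real m + 0) = ((z / 2)\<^sup>2) ^ m" .
    have rGamma: "rGamma (real m + 0 + 1) = inverse (fact m)"
      using Gamma_fact[of m] by (simp add: rGamma_inverse_Gamma add.commute)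
    show ?thesis
      unfolding pow rGamma by (simp only: divide_inverse power2_eq_square inverse_mult_distrib mult.assoc)
  qed
  have "summable (\<lambda>m. ((z / 2)\<^sup>2) ^ m / (fact m)\<^sup>2)"
  proof (rule summable_comparison_test'[OF sums_summable[OF exp_series_sums_real]])
    fix m :: nat
    have "((z / 2)\<^sup>2) ^ m / (fact m)\<^sup>2 \<le> ((z / 2)\<^sup>2) ^ m / fact m"
      by (intro divide_left_mono) (auto simp: power2_eq_square)
    then show "norm (((z / 2)\<^sup>2) ^ m / (fact m)\<^sup>2) \<le> ((z / 2)\<^sup>2) ^ m / fact m"
      by simp
  qed
  then show ?thesis
    unfolding bessel_I_def term_eq by (simp add: summable_sums)
qed

lemma has_integral_Gaussian_moment:
  assumes "a \<ge> 0"
  shows "((\<lambda>t. t * (t\<^sup>2 / 2) ^ m * exp (- (t\<^sup>2 / 2))) has_integral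
           fact m * exp (- (a\<^sup>2 / 2)) * exp_trunc m (a\<^sup>2 / 2)) {a..}"
proof -
  let ?G = "\<lambda>t. - fact m * (exp (- (t\<^sup>2 / 2)) * exp_trunc m (t\<^sup>2 / 2))"
  have "(?G has_real_derivative t * (t\<^sup>2 / 2) ^ m * exp (- (t\<^sup>2 / 2))) (at t)" for t
  proof -
    have "((\<lambda>t. exp (- (t\<^sup>2 / 2))) has_real_derivative exp (- (t\<^sup>2 / 2)) * (- t)) (at t)"
      by (auto intro!: derivative_eq_intros)
    moreover have "((\<lambda>t. exp_trunc m (t\<^sup>2 / 2)) has_real_derivative
        (exp_trunc m (t\<^sup>2 / 2) - (t\<^sup>2 / 2) ^ m / fact m) * t) (at t)"
      by (rule DERIV_chain2[OF has_real_derivative_exp_trunc]) (auto intro!: derivative_eq_intros)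
    ultimately have "(?G has_real_derivative - fact m * (exp (- (t\<^sup>2 / 2)) * (- t) * exp_trunc m (t\<^sup>2 / 2)
        + (exp_trunc m (t\<^sup>2 / 2) - (t\<^sup>2 / 2) ^ m / fact m) * t * exp (- (t\<^sup>2 / 2)))) (at t)"
      by (intro DERIV_cmult DERIV_mult)
    then show ?thesis
      by (simp add: algebra_simps)
  qed
  moreover have "filterlim (\<lambda>t::real. t\<^sup>2 / 2) at_top at_top"
    by real_asymp
  then have "(?G \<longlongrightarrow> - fact m * 0) at_top"
    by (intro tendsto_mult tendsto_const filterlim_compose[OF exp_minus_mult_exp_trunc_tendsto_0])
  ultimately have "((\<lambda>t. t * (t\<^sup>2 / 2) ^ m * exp (- (t\<^sup>2 / 2))) has_integral - fact m * 0 - ?G a) {a..}"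
    using assms by (intro has_integral_atLeast_FTC) auto
  then show ?thesis
    by (simp add: mult.assoc)
qed

lemma summable_exp_trunc_series:
  assumes "y \<ge> 0"
  shows "summable (\<lambda>m. y ^ m / fact m * exp_trunc m y)"
proof (rule summable_comparison_test')
  show "summable (\<lambda>m. exp y * (y ^ m / fact m))"
    by (intro summable_mult sums_summable[OF exp_series_sums_real])
  show "norm (y ^ m / fact m * exp_trunc m y) \<le> exp y * (y ^ m / fact m)" for m
    using assms exp_trunc_nonneg[of y m] mult_left_mono[OF exp_trunc_le_exp[of y m], of "y ^ m / fact m"]
    by (simp add: mult.commute)
qed

lemma marcum_Q_1_integrand_sums:
  assumes a: "a > 0" and t: "t > 0"
  defines "y \<equiv> a\<^sup>2 / 2"
  shows "(\<lambda>m. exp (- y) * (y ^ m / (fact m)\<^sup>2) * (t * (t\<^sup>2 / 2) ^ m * exp (- (t\<^sup>2 / 2)))) sums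
           (t powr 1 * exp (- (t\<^sup>2 + a\<^sup>2) / 2) * bessel_I (1 - 1) (a * t))"
proof -
  have sq: "(a * t / 2)\<^sup>2 = y * (t\<^sup>2 / 2)"
    unfolding y_def by (simp add: power_mult_distrib power_divide)
  then have "(\<lambda>m. (exp (- y) * (t * exp (- (t\<^sup>2 / 2)))) * ((y * (t\<^sup>2 / 2)) ^ m / (fact m)\<^sup>2)) sums
      (exp (- y) * (t * exp (- (t\<^sup>2 / 2))) * bessel_I 0 (a * t))"
    using bessel_I_0_sums[of "a * t", unfolded sq] a t by (intro sums_mult) simp
  moreover have "exp (- y) * (t * exp (- (t\<^sup>2 / 2))) * ((y * (t\<^sup>2 / 2)) ^ m / (fact m)\<^sup>2)
      = exp (- y) * (y ^ m / (fact m)\<^sup>2) * (t * (t\<^sup>2 / 2) ^ m * exp (- (t\<^sup>2 / 2)))" for m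
    unfolding power_mult_distrib by simp
  moreover have "exp (- y) * exp (- (t\<^sup>2 / 2)) = exp (- (t\<^sup>2 + a\<^sup>2) / 2)"
    unfolding y_def by (simp add: exp_add[symmetric] add_divide_distrib)
  ultimately show ?thesis
    using t by (simp add: mult.commute mult.left_commute)
qed

lemma marcum_Q_1_diagonal:
  assumes y: "y > 0"
  shows "marcum_Q 1 (sqrt (2 * y)) (sqrt (2 * y)) = exp (- 2 * y) * (\<Sum>m. y ^ m / fact m * exp_trunc m y)"
proof -
  define a where "a = sqrt (2 * y)"
  have a: "a > 0" "a\<^sup>2 / 2 = y"
    using y by (auto simp: a_def)
  have exp_2y: "exp (- y) * exp (- y) = exp (- 2 * y)"
    by (simp add: exp_add[symmetric])
  define h where "h m t = exp (- y) * (y ^ m / (fact m)\<^sup>2) * (t * (t\<^sup>2 / 2) ^ m * exp (- (t\<^sup>2 / 2)))" for m t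
  have "(h m has_integral exp (- 2 * y) * (y ^ m / fact m * exp_trunc m y)) {a..}" for m
  proof -
    have "(h m has_integral exp (- y) * (y ^ m / (fact m)\<^sup>2) * (fact m * exp (- y) * exp_trunc m y)) {a..}"
      unfolding h_def using has_integral_Gaussian_moment[of a m] a
      by (intro has_integral_mult_right) simp
    moreover have "exp (- y) * (y ^ m / (fact m)\<^sup>2) * (fact m * exp (- y) * exp_trunc m y)
        = exp (- 2 * y) * (y ^ m / fact m * exp_trunc m y)"
      unfolding exp_2y[symmetric] by (simp add: power2_eq_square)
    ultimately show ?thesis by simp
  qed
  moreover have "(\<lambda>m. h m t) sums (t powr 1 * exp (- (t\<^sup>2 + a\<^sup>2) / 2) * bessel_I (1 - 1) (a * t))"
    if "t \<in> {a..}" for t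
    using marcum_Q_1_integrand_sums[of a t] that a unfolding h_def by simp
  moreover have "h m t \<ge> 0" if "t \<in> {a..}" for m t
    using that a y by (simp add: h_def)
  moreover have "summable (\<lambda>m. exp (- 2 * y) * (y ^ m / fact m * exp_trunc m y))"
    using y by (intro summable_mult summable_exp_trunc_series) simp
  ultimately have "((\<lambda>t. t powr 1 * exp (- (t\<^sup>2 + a\<^sup>2) / 2) * bessel_I (1 - 1) (a * t)) has_integral
      (\<Sum>m. exp (- 2 * y) * (y ^ m / fact m * exp_trunc m y))) {a..}"
    by (intro has_integral_suminf_nonneg[of h]) auto
  moreover have "(\<Sum>m. exp (- 2 * y) * (y ^ m / fact m * exp_trunc m y))
      = exp (- 2 * y) * (\<Sum>m. y ^ m / fact m * exp_trunc m y)"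
    using y by (intro suminf_mult summable_exp_trunc_series) simp
  ultimately show ?thesis
    using a unfolding marcum_Q_def a_def[symmetric] by (simp add: integral_unique)
qed

lemma Xstar_pmf_expectation_sums:
  fixes f :: "nat \<Rightarrow> real"
  assumes lam: "lam > 0" and bound: "\<And>n. \<bar>f (Suc n)\<bar> \<le> B"
  shows "(\<lambda>n. exp (- lam) * (lam ^ n / fact n * f (Suc n))) sums
           measure_pmf.expectation (Xstar_pmf lam) f"
proof -
  let ?g = "\<lambda>n. exp (- lam) * (lam ^ n / fact n * f (Suc n))"
  have "measure_pmf.expectation (Xstar_pmf lam) f = measure_pmf.expectation (poisson_pmf lam) (\<lambda>n. f (Suc n))"
    by (simp add: Xstar_pmf_def)
  also have "\<dots> = (\<integral>n. ?g n \<partial>count_space UNIV)"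
    unfolding measure_pmf_eq_density
    using lam by (subst integral_density) (auto simp: mult_ac)
  finally have "measure_pmf.expectation (Xstar_pmf lam) f = (\<integral>n. ?g n \<partial>count_space UNIV)" .
  moreover have "integrable (count_space UNIV) ?g"
    unfolding integrable_count_space_nat_iff
  proof (rule summable_comparison_test')
    show "summable (\<lambda>n. exp (- lam) * B * (lam ^ n / fact n))"
      by (intro summable_mult sums_summable[OF exp_series_sums_real])
    show "norm (norm (?g n)) \<le> exp (- lam) * B * (lam ^ n / fact n)" for n
      using lam mult_left_mono[OF bound[of n], of "exp (- lam) * (lam ^ n / fact n)"]
      by (simp add: abs_mult mult_ac)
  qed
  ultimately show ?thesis
    using sums_integral_count_space_nat by metis
qed

lemma Xstar_pmf_expectation_exp_weight_sums:
  fixes a :: "nat \<Rightarrow> real"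
  assumes "lam > 0" "x \<ge> 0" "\<And>n. \<bar>a (Suc n)\<bar> \<le> B"
  shows "(\<lambda>n. exp (- lam - x) * ((lam * exp (- x)) ^ n / fact n * a (Suc n))) sums
           measure_pmf.expectation (Xstar_pmf lam) (\<lambda>k. exp (- x * real k) * a k)"
proof -
  have bound: "\<bar>exp (- x * real (Suc n)) * a (Suc n)\<bar> \<le> B" for n
  proof -
    have "exp (- x * real (Suc n)) \<le> 1"
      using assms by simp
    then have "exp (- x * real (Suc n)) * \<bar>a (Suc n)\<bar> \<le> 1 * B"
      using assms(3)[of n] by (intro mult_mono) auto
    then show ?thesis by (simp add: abs_mult)
  qed
  have term_eq: "exp (- lam) * (lam ^ n / fact n * (exp (- x * real (Suc n)) * a (Suc n)))
      = exp (- lam - x) * ((lam * exp (- x)) ^ n / fact n * a (Suc n))" for n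
  proof -
    have "(lam * exp (- x)) ^ n = lam ^ n * exp (- x * real n)"
      by (simp add: power_mult_distrib exp_of_nat_mult[symmetric] mult.commute)
    moreover have "exp (- x * real (Suc n)) = exp (- x * real n) * exp (- x)"
      "exp (- lam - x) = exp (- lam) * exp (- x)"
      by (simp_all add: exp_add[symmetric] algebra_simps)
    ultimately show ?thesis
      by (simp add: mult_ac)
  qed
  have "(\<lambda>n. exp (- lam) * (lam ^ n / fact n * (exp (- x * real (Suc n)) * a (Suc n)))) sums
      measure_pmf.expectation (Xstar_pmf lam) (\<lambda>k. exp (- x * real k) * a k)"
    by (rule Xstar_pmf_expectation_sums[where f = "\<lambda>k. exp (- x * real k) * a k", OF \<open>lam > 0\<close> bound])
  then show ?thesis
    unfolding term_eq .
qed

lemma abs_mult_le_mult_bounds: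
  fixes u v :: real
  assumes "\<bar>u\<bar> \<le> C" "\<bar>v\<bar> \<le> B"
  shows "\<bar>u * v\<bar> \<le> C * B"
  using assms by (simp add: abs_mult mult_mono')

lemma expectation_scaled_tendsto_at_top:
  fixes p :: "nat pmf" and w :: "nat \<Rightarrow> real" and h :: "real \<Rightarrow> real"
  assumes p: "0 \<notin> set_pmf p" and w: "\<And>k. \<bar>w k\<bar> \<le> C"
    and h: "\<And>s. s > 0 \<Longrightarrow> \<bar>h s\<bar> \<le> B" and lim: "(h \<longlongrightarrow> L) at_top"
  shows "((\<lambda>\<epsilon>. measure_pmf.expectation p (\<lambda>k. w k * h (\<epsilon> * real k)))
           \<longlongrightarrow> measure_pmf.expectation p (\<lambda>k. w k * L)) at_top"
proof (rule integral_dominated_convergence_at_top[where w = "\<lambda>_. C * B"])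
  have pos: "real k > 0" if "k \<in> set_pmf p" for k
    using p that by (metis gr0I of_nat_0_less_iff)
  have lim_k: "((\<lambda>\<epsilon>. w k * h (\<epsilon> * real k)) \<longlongrightarrow> w k * L) at_top" if "k > 0" for k
  proof -
    have "filterlim (\<lambda>\<epsilon>. \<epsilon> * real k) at_top at_top"
      using that by (intro filterlim_at_top_mult_tendsto_pos[OF tendsto_const _ filterlim_ident]) simp
    then show ?thesis
      by (intro tendsto_mult_left filterlim_compose[OF lim])
  qed
  show "AE k in measure_pmf p. ((\<lambda>\<epsilon>. w k * h (\<epsilon> * real k)) \<longlongrightarrow> w k * L) at_top"
    unfolding AE_measure_pmf_iff using pos lim_k by simp
  show "\<forall>\<^sub>F \<epsilon> in at_top. AE k in measure_pmf p. norm (w k * h (\<epsilon> * real k)) \<le> C * B"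
    using eventually_gt_at_top[of 0]
  proof eventually_elim
    case (elim \<epsilon>)
    then show ?case
      by (auto simp: AE_measure_pmf_iff intro!: abs_mult_le_mult_bounds w h mult_pos_pos pos)
  qed
qed simp_all

lemma isCont_expectation_scaled:
  fixes p :: "nat pmf" and w :: "nat \<Rightarrow> real" and h :: "real \<Rightarrow> real"
  assumes p: "0 \<notin> set_pmf p" and w: "\<And>k. \<bar>w k\<bar> \<le> C"
    and h: "\<And>s. s > 0 \<Longrightarrow> \<bar>h s\<bar> \<le> B" and cont: "\<And>s. s > 0 \<Longrightarrow> isCont h s"
    and "\<epsilon>\<^sub>0 > 0"
  shows "isCont (\<lambda>\<epsilon>. measure_pmf.expectation p (\<lambda>k. w k * h (\<epsilon> * real k))) \<epsilon>\<^sub>0"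
  unfolding isCont_def
proof (rule integral_dominated_convergence_at[where w = "\<lambda>_. C * B"])
  have pos: "real k > 0" if "k \<in> set_pmf p" for k
    using p that by (metis gr0I of_nat_0_less_iff)
  have lim_k: "((\<lambda>\<epsilon>. w k * h (\<epsilon> * real k)) \<longlongrightarrow> w k * h (\<epsilon>\<^sub>0 * real k)) (at \<epsilon>\<^sub>0)" if "k > 0" for k
    using that \<open>\<epsilon>\<^sub>0 > 0\<close>
    by (intro tendsto_mult_left isCont_tendsto_compose[OF cont] tendsto_intros) auto
  show "AE k in measure_pmf p. ((\<lambda>\<epsilon>. w k * h (\<epsilon> * real k)) \<longlongrightarrow> w k * h (\<epsilon>\<^sub>0 * real k)) (at \<epsilon>\<^sub>0)"
    unfolding AE_measure_pmf_iff using pos lim_k by simp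
  show "\<forall>\<^sub>F \<epsilon> in at \<epsilon>\<^sub>0. AE k in measure_pmf p. norm (w k * h (\<epsilon> * real k)) \<le> C * B"
    using eventually_at_in_open'[of "{0<..}" \<epsilon>\<^sub>0] \<open>\<epsilon>\<^sub>0 > 0\<close>
    by (auto elim!: eventually_mono simp: AE_measure_pmf_iff intro!: abs_mult_le_mult_bounds w h mult_pos_pos pos)
qed simp_all

lemma abs_H_fun_le:
  assumes "lam > 0" "s > 0"
  shows "\<bar>H_fun lam x s\<bar> \<le> exp (- lam) / (1 - exp (- lam)) * exp (lam * exp (- x))"
proof -
  define y where "y = lam * exp (- x)"
  define R where "R = exp y * upper_inc_Gamma s y / Gamma s"
  have "y \<ge> 0" "Gamma s > 0"
    using assms by (simp_all add: y_def)
  then have "0 \<le> R" "R \<le> exp y"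
    using upper_inc_Gamma_nonneg[of s y] upper_inc_Gamma_le_Gamma[of s y] assms
    by (simp_all add: R_def divide_le_eq)
  moreover have "1 \<le> exp y"
    using \<open>y \<ge> 0\<close> by simp
  ultimately have "\<bar>R - 1\<bar> \<le> exp y"
    by linarith
  moreover have c: "0 < exp (- lam) / (1 - exp (- lam))"
    using assms by simp
  ultimately have "exp (- lam) / (1 - exp (- lam)) * \<bar>R - 1\<bar> \<le> exp (- lam) / (1 - exp (- lam)) * exp y"
    by (intro mult_left_mono) auto
  then show ?thesis
    unfolding H_fun_def R_def[symmetric] y_def[symmetric] abs_mult abs_of_pos[OF c] .
qed

lemma H_fun_tendsto_at_top:
  assumes "lam > 0"
  shows "(H_fun lam x \<longlongrightarrow> exp (- lam) / (1 - exp (- lam)) * (exp (lam * exp (- x)) - 1)) at_top"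
proof -
  have "((\<lambda>s. exp (- lam) / (1 - exp (- lam)) *
      (exp (lam * exp (- x)) * (upper_inc_Gamma s (lam * exp (- x)) / Gamma s) - 1))
      \<longlongrightarrow> exp (- lam) / (1 - exp (- lam)) * (exp (lam * exp (- x)) * 1 - 1)) at_top"
    using assms by (intro tendsto_intros upper_inc_Gamma_div_Gamma_tendsto_1) simp
  then show ?thesis
    by (simp add: H_fun_def[abs_def])
qed

lemma isCont_H_fun:
  assumes "lam > 0" "s > 0"
  shows "isCont (H_fun lam x) s"
proof -
  have "Gamma s \<noteq> 0"
    using Gamma_real_pos[OF \<open>s > 0\<close>] by linarith
  moreover have "s \<notin> \<int>\<^sub>\<le>\<^sub>0"
    using assms by (auto dest: nonpos_Ints_nonpos)
  ultimately show ?thesis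
    unfolding H_fun_def[abs_def] using assms
    by (intro continuous_intros isCont_upper_inc_Gamma) simp_all
qed

lemma H_fun_of_nat:
  assumes "lam > 0"
  shows "H_fun lam x (real (Suc n)) =
           exp (- lam) / (1 - exp (- lam)) * (exp_trunc n (lam * exp (- x)) - 1)"
proof -
  have "Gamma (real (Suc n)) = fact n"
    using Gamma_fact[of n] by (simp add: add.commute)
  moreover have "upper_inc_Gamma (real (Suc n)) (lam * exp (- x))
      = fact n * exp (- (lam * exp (- x))) * exp_trunc n (lam * exp (- x))"
    using assms by (intro upper_inc_Gamma_of_nat) simp
  ultimately show ?thesis
    unfolding H_fun_def by (simp add: exp_minus)
qed

lemma Xstar_pmf_expectation_exp_weight_const:
  assumes "lam > 0" "x \<ge> 0"
  shows "measure_pmf.expectation (Xstar_pmf lam) (\<lambda>k. exp (- x * real k) * K)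
           = exp (- lam - x) * exp (lam * exp (- x)) * K"
proof -
  have "(\<lambda>n. exp (- lam - x) * ((lam * exp (- x)) ^ n / fact n * K)) sums
      measure_pmf.expectation (Xstar_pmf lam) (\<lambda>k. exp (- x * real k) * K)"
    using Xstar_pmf_expectation_exp_weight_sums[of lam x "\<lambda>_. K" "\<bar>K\<bar>"] assms by simp
  moreover have "(\<lambda>n. exp (- lam - x) * ((lam * exp (- x)) ^ n / fact n * K)) sums
      (exp (- lam - x) * (exp (lam * exp (- x)) * K))"
    by (intro sums_mult sums_mult2 exp_series_sums_real)
  ultimately show ?thesis
    by (simp add: sums_unique2 mult.assoc)
qed

lemma Xstar_pmf_expectation_exp_weight_H_fun_of_nat:
  assumes "lam > 0" "x \<ge> 0"
  defines "y \<equiv> lam * exp (- x)"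
  shows "measure_pmf.expectation (Xstar_pmf lam) (\<lambda>k. exp (- x * real k) * H_fun lam x (real k))
           = exp (- lam - x) * (exp (- lam) / (1 - exp (- lam))) *
               ((\<Sum>n. y ^ n / fact n * exp_trunc n y) - exp y)"
proof -
  define c where "c = exp (- lam) / (1 - exp (- lam))"
  have sums_H: "(\<lambda>n. exp (- lam - x) * (y ^ n / fact n * H_fun lam x (real (Suc n)))) sums
      measure_pmf.expectation (Xstar_pmf lam) (\<lambda>k. exp (- x * real k) * H_fun lam x (real k))"
    unfolding y_def
    by (rule Xstar_pmf_expectation_exp_weight_sums[OF assms(1,2) abs_H_fun_le[OF assms(1)]]) simp
  have term_eq: "y ^ n / fact n * H_fun lam x (real (Suc n)) =
      c * (y ^ n / fact n * exp_trunc n y) - c * (y ^ n / fact n)" for n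
  proof -
    have H: "H_fun lam x (real (Suc n)) = c * (exp_trunc n y - 1)"
      unfolding c_def y_def by (rule H_fun_of_nat[OF assms(1)])
    show ?thesis
      unfolding H by (simp add: algebra_simps)
  qed
  note sums_H[unfolded term_eq]
  moreover have "(\<lambda>n. exp (- lam - x) * (c * (y ^ n / fact n * exp_trunc n y) - c * (y ^ n / fact n))) sums
      (exp (- lam - x) * (c * (\<Sum>n. y ^ n / fact n * exp_trunc n y) - c * exp y))"
    using assms
    by (intro sums_mult sums_diff summable_sums summable_exp_trunc_series exp_series_sums_real) simp
  ultimately have "measure_pmf.expectation (Xstar_pmf lam) (\<lambda>k. exp (- x * real k) * H_fun lam x (real k))
      = exp (- lam - x) * (c * (\<Sum>n. y ^ n / fact n * exp_trunc n y) - c * exp y)"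
    by (rule sums_unique2)
  then show ?thesis
    unfolding c_def[symmetric] by (simp add: algebra_simps)
qed

lemma Xstar_pmf_expectation_H_fun_tendsto_at_1:
  assumes "lam > 0" "x > 0"
  defines "y \<equiv> lam * exp (- x)" and "c \<equiv> exp (- lam) / (1 - exp (- lam))"
  shows "((\<lambda>\<epsilon>. measure_pmf.expectation (Xstar_pmf lam) (\<lambda>k. exp (- x * real k) * H_fun lam x (\<epsilon> * real k)))
           \<longlongrightarrow> c * exp (- lam - x) * ((\<Sum>n. y ^ n / fact n * exp_trunc n y) - exp y)) (at 1)"
proof -
  let ?E = "\<lambda>\<epsilon>. measure_pmf.expectation (Xstar_pmf lam) (\<lambda>k. exp (- x * real k) * H_fun lam x (\<epsilon> * real k))"
  have "isCont ?E 1"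
    by (rule isCont_expectation_scaled[where w = "\<lambda>k. exp (- x * real k)" and C = 1,
          OF _ _ abs_H_fun_le[OF assms(1)] isCont_H_fun[OF assms(1)]])
       (use assms in \<open>auto simp: Xstar_pmf_def\<close>)
  then have "(?E \<longlongrightarrow> ?E 1) (at 1)"
    unfolding isCont_def .
  also have "?E 1 = c * exp (- lam - x) * ((\<Sum>n. y ^ n / fact n * exp_trunc n y) - exp y)"
    using Xstar_pmf_expectation_exp_weight_H_fun_of_nat[of lam x] assms by (simp add: mult_ac)
  finally show ?thesis .
qed

lemma Xstar_pmf_expectation_H_fun_tendsto_at_top:
  assumes "lam > 0" "x > 0"
  defines "y \<equiv> lam * exp (- x)" and "c \<equiv> exp (- lam) / (1 - exp (- lam))"
  shows "((\<lambda>\<epsilon>. measure_pmf.expectation (Xstar_pmf lam) (\<lambda>k. exp (- x * real k) * H_fun lam x (\<epsilon> * real k)))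
           \<longlongrightarrow> c * exp (- lam - x) * exp y * (exp y - 1)) at_top"
proof -
  have "((\<lambda>\<epsilon>. measure_pmf.expectation (Xstar_pmf lam) (\<lambda>k. exp (- x * real k) * H_fun lam x (\<epsilon> * real k)))
      \<longlongrightarrow> measure_pmf.expectation (Xstar_pmf lam) (\<lambda>k. exp (- x * real k) * (c * (exp y - 1)))) at_top"
    unfolding y_def c_def
    by (rule expectation_scaled_tendsto_at_top[where w = "\<lambda>k. exp (- x * real k)" and C = 1,
          OF _ _ abs_H_fun_le[OF assms(1)] H_fun_tendsto_at_top[OF assms(1)]])
       (use assms in \<open>auto simp: Xstar_pmf_def\<close>)
  also have "measure_pmf.expectation (Xstar_pmf lam) (\<lambda>k. exp (- x * real k) * (c * (exp y - 1)))
      = c * exp (- lam - x) * exp y * (exp y - 1)"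
    unfolding y_def using assms by (subst Xstar_pmf_expectation_exp_weight_const) (auto simp: mult_ac)
  finally show ?thesis .
qed

theorem mainTheorem5:
  fixes lam x :: real
  assumes "lam > 0" and "x > 0"
  shows "((\<lambda>\<epsilon>. measure_pmf.expectation (Xstar_pmf lam)
              (\<lambda>k. exp (- x * real k) * H_fun lam x (\<epsilon> * real k)))
          \<longlongrightarrow> exp (- 2 * lam) / (1 - exp (- lam)) * exp (lam * exp (- x) - x) *
              (exp (lam * exp (- x)) *
                 marcum_Q 1 (sqrt (2 * lam * exp (- x))) (sqrt (2 * lam * exp (- x))) - 1)) (at 1)
       \<and> ((\<lambda>\<epsilon>. measure_pmf.expectation (Xstar_pmf lam)
              (\<lambda>k. exp (- x * real k) * H_fun lam x (\<epsilon> * real k)))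
          \<longlongrightarrow> exp (- 2 * lam) / (1 - exp (- lam)) * exp (lam * exp (- x) - x) *
              (exp (lam * exp (- x)) - 1)) at_top"
proof -
  define y where "y = lam * exp (- x)"
  define c where "c = exp (- lam) / (1 - exp (- lam))"
  define S where "S = (\<Sum>n. y ^ n / fact n * exp_trunc n y)"
  have factor: "exp (- 2 * lam) / (1 - exp (- lam)) * exp (y - x) = c * exp (- lam - x) * exp y"
    by (simp add: c_def flip: exp_add)
  have marcum: "exp y * marcum_Q 1 (sqrt (2 * lam * exp (- x))) (sqrt (2 * lam * exp (- x))) = exp (- y) * S"
    using marcum_Q_1_diagonal[of y] assms by (simp add: y_def S_def mult.assoc flip: exp_add)
  have value_at_1: "c * exp (- lam - x) * exp y * (exp (- y) * S - 1) = c * exp (- lam - x) * (S - exp y)"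
    by (simp add: exp_minus field_simps)
  show ?thesis
    unfolding y_def[symmetric] factor marcum value_at_1
    using Xstar_pmf_expectation_H_fun_tendsto_at_1[OF assms, folded y_def, folded c_def S_def]
      Xstar_pmf_expectation_H_fun_tendsto_at_top[OF assms, folded y_def, folded c_def] ..
qed

end
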